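(* For positive integers $m\le n$, the complete bipartite graph $K_{m,n}$ satisfies $IDI(K_{m,n})=n$ if $m<n$, and $IDI(K_{m,n})=n+1$ if $m=n$.
   Context: For a finite simple connected graph $G=(V,E)$ with diameter $d$, a rank assignment is a function $f:V\to\mathbb{R}$; under $f$, the string of a vertex $v$ is the $d$-vector whose $i$-th coordinate is the sum of $f(w)$ over all vertices $w$ with $d(v,w)=i$. The ID-index $IDI(G)$ is the minimum $k$ such that there exists $f:V\to\mathbb{R}$ with $|f(V)|=k$ under which all vertices have distinct strings. *)

theory Defs
  imports Complex_Main
begin

text \<open>A graph is given by a finite vertex set V and a symmetric irreflexive
adjacency relation E (only its restriction to V matters).\<close>

fun walk_len :: "'a set \<Rightarrow> ('a \<Rightarrow> 'a \<Rightarrow> bool) \<Rightarrow> nat \<Rightarrow> 'a \<Rightarrow> 'a \<Rightarrow> bool" where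
  "walk_len V E 0 u v = (u \<in> V \<and> u = v)"
| "walk_len V E (Suc k) u v = (u \<in> V \<and> (\<exists>w\<in>V. E u w \<and> walk_len V E k w v))"

definition gdist :: "'a set \<Rightarrow> ('a \<Rightarrow> 'a \<Rightarrow> bool) \<Rightarrow> 'a \<Rightarrow> 'a \<Rightarrow> nat" where
  "gdist V E u v = (LEAST k. walk_len V E k u v)"

definition diameter :: "'a set \<Rightarrow> ('a \<Rightarrow> 'a \<Rightarrow> bool) \<Rightarrow> nat" where
  "diameter V E = Max {gdist V E u v | u v. u \<in> V \<and> v \<in> V}"

definition vstring :: "'a set \<Rightarrow> ('a \<Rightarrow> 'a \<Rightarrow> bool) \<Rightarrow> ('a \<Rightarrow> real) \<Rightarrow> 'a \<Rightarrow> real list" where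
  "vstring V E f v = map (\<lambda>i. \<Sum>w\<in>{w\<in>V. gdist V E v w = i}. f w) [1..<diameter V E + 1]"

definition IDI :: "'a set \<Rightarrow> ('a \<Rightarrow> 'a \<Rightarrow> bool) \<Rightarrow> nat" where
  "IDI V E = (LEAST k. \<exists>f :: 'a \<Rightarrow> real. card (f ` V) = k \<and> inj_on (vstring V E f) V)"

definition Kbip_V :: "nat \<Rightarrow> nat \<Rightarrow> (nat + nat) set" where
  "Kbip_V m n = Inl ` {..<m} \<union> Inr ` {..<n}"

definition Kbip_E :: "(nat + nat) \<Rightarrow> (nat + nat) \<Rightarrow> bool" where
  "Kbip_E x y = (isl x \<noteq> isl y)"

end

(*
  In K_{m,n} two distinct vertices are at distance 1 if they lie in different parts and at
  distance 2 otherwise, so the string of a vertex u is (sum of f over the other part, sum of f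
  over the part of u minus f u), truncated to its first entry for K_{1,1}. Hence the strings are
  distinct iff f is injective on each part and the two parts take disjoint sets of values
  whenever their sums agree. Injectivity on the part of size n forces n values. If m = n and only
  n values occur, both parts take all of them, so their sums agree while their values meet.
  The bounds are attained by u |-> i on the i-th vertex of either part when m < n, and by
  shifting the values on one part by 1 when m = n.
*)
theory Submission
  imports Defs
begin

lemma gdist_eqI:
  assumes "walk_len V E k u v" and "\<And>j. j < k \<Longrightarrow> \<not> walk_len V E j u v"
  shows "gdist V E u v = k"
  unfolding gdist_def using assms by (intro Least_equality) (auto simp: not_less[symmetric])

lemma gdist_self: "u \<in> V \<Longrightarrow> gdist V E u u = 0"
  by (rule gdist_eqI) auto

lemma gdist_adjacent:
  assumes "u \<in> V" "v \<in> V" "E u v" "u \<noteq> v"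
  shows "gdist V E u v = 1"
  using assms by (intro gdist_eqI) (auto simp: less_Suc_eq)

lemma gdist_common_neighbour:
  assumes "u \<in> V" "v \<in> V" "w \<in> V" "E u w" "E w v" "\<not> E u v" "u \<noteq> v"
  shows "gdist V E u v = 2"
  using assms by (intro gdist_eqI) (auto simp: numeral_2_eq_2 less_Suc_eq)

definition Kbip_part :: "nat \<Rightarrow> nat \<Rightarrow> bool \<Rightarrow> (nat + nat) set" where
  "Kbip_part m n b = (if b then Inl ` {..<m} else Inr ` {..<n})"

lemma Inl_mem_Kbip_V [simp]: "Inl i \<in> Kbip_V m n \<longleftrightarrow> i < m"
  and Inr_mem_Kbip_V [simp]: "Inr j \<in> Kbip_V m n \<longleftrightarrow> j < n"
  by (auto simp: Kbip_V_def)

lemma mem_Kbip_part: "u \<in> Kbip_part m n b \<longleftrightarrow> u \<in> Kbip_V m n \<and> isl u = b"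
  unfolding Kbip_part_def Kbip_V_def by (cases u) auto

lemma finite_Kbip_V [simp]: "finite (Kbip_V m n)"
  by (simp add: Kbip_V_def)

lemma finite_Kbip_part [simp]: "finite (Kbip_part m n b)"
  by (simp add: Kbip_part_def)

lemma card_Kbip_part: "card (Kbip_part m n b) = (if b then m else n)"
  by (simp add: Kbip_part_def card_image)

lemma sum_Kbip_part:
  "sum f (Kbip_part m n b) = (if b then \<Sum>i<m. f (Inl i) else \<Sum>j<n. f (Inr j))"
  by (simp add: Kbip_part_def sum.reindex)

lemma Kbip_part_nonempty:
  assumes "0 < m" "0 < n"
  shows "\<exists>w. w \<in> Kbip_part m n b"
  using assms by (cases b) (auto simp: Kbip_part_def)

lemma gdist_Kbip:
  assumes "0 < m" "0 < n" "u \<in> Kbip_V m n" "v \<in> Kbip_V m n"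
  shows "gdist (Kbip_V m n) Kbip_E u v = (if u = v then 0 else if isl u = isl v then 2 else 1)"
proof -
  obtain w where "w \<in> Kbip_part m n (\<not> isl u)"
    using Kbip_part_nonempty[OF assms(1,2)] by blast
  then show ?thesis
    using assms(3,4)
    by (auto simp: Kbip_E_def mem_Kbip_part gdist_self gdist_adjacent
        intro!: gdist_common_neighbour[of _ _ _ w])
qed

lemma diameter_Kbip:
  assumes "0 < m" "0 < n"
  shows "diameter (Kbip_V m n) Kbip_E = (if m = 1 \<and> n = 1 then 1 else 2)"
proof -
  let ?V = "Kbip_V m n"
  let ?S = "{gdist ?V Kbip_E u v | u v. u \<in> ?V \<and> v \<in> ?V}"
  define d :: nat where "d = (if m = 1 \<and> n = 1 then 1 else 2)"
  have le_d: "gdist ?V Kbip_E u v \<le> d" if "u \<in> ?V" "v \<in> ?V" for u v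
    using that gdist_Kbip[OF assms that] by (cases u; cases v) (auto simp: d_def)
  have "\<exists>u\<in>?V. \<exists>v\<in>?V. gdist ?V Kbip_E u v = d"
  proof (cases "m = 1 \<and> n = 1")
    case True
    then show ?thesis
      by (intro bexI[of _ "Inl 0"] bexI[of _ "Inr 0"]) (auto simp: gdist_Kbip d_def)
  next
    case False
    then have "1 < m \<or> 1 < n" using assms by linarith
    then show ?thesis
    proof
      assume "1 < m"
      then show ?thesis
        using assms False
        by (intro bexI[of _ "Inl 0"] bexI[of _ "Inl 1"]) (auto simp: gdist_Kbip d_def)
    next
      assume "1 < n"
      then show ?thesis
        using assms False
        by (intro bexI[of _ "Inr 0"] bexI[of _ "Inr 1"]) (auto simp: gdist_Kbip d_def)
    qed
  qed
  then have "d \<in> ?S" by blast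
  moreover have "finite ?S"
    by (rule finite_subset[of _ "{..d}"]) (auto dest: le_d)
  ultimately have "Max ?S = d"
    by (intro Max_eqI) (auto dest: le_d)
  then show ?thesis unfolding diameter_def d_def .
qed

lemma vstring_Kbip:
  assumes "0 < m" "0 < n" "u \<in> Kbip_V m n"
  shows "vstring (Kbip_V m n) Kbip_E f u =
    (if m = 1 \<and> n = 1 then [sum f (Kbip_part m n (\<not> isl u))]
     else [sum f (Kbip_part m n (\<not> isl u)), sum f (Kbip_part m n (isl u)) - f u])"
proof -
  let ?V = "Kbip_V m n"
  have upto: "[1..<diameter ?V Kbip_E + 1] = (if m = 1 \<and> n = 1 then [1] else [1, 2])"
    by (simp add: diameter_Kbip assms(1,2) upt_rec)
  have sphere1: "{w \<in> ?V. gdist ?V Kbip_E u w = 1} = Kbip_part m n (\<not> isl u)"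
    using gdist_Kbip[OF assms] by (auto simp: mem_Kbip_part split: if_splits)
  have sphere2: "{w \<in> ?V. gdist ?V Kbip_E u w = 2} = Kbip_part m n (isl u) - {u}"
    using gdist_Kbip[OF assms] by (auto simp: mem_Kbip_part split: if_splits)
  have own_part: "u \<in> Kbip_part m n (isl u)"
    using assms(3) by (simp add: mem_Kbip_part)
  \<comment> \<open>The full simplifier would substitute \<open>m = 1\<close>, \<open>n = 1\<close> into the goal and
    then the sphere equations no longer match.\<close>
  show ?thesis
    unfolding vstring_def upto
    by (simp only: if_distrib[of "map _"] list.map sphere1 sphere2
        sum_diff1[OF finite_Kbip_part] own_part if_True)
qed

lemma vstring_Kbip_eq_iff:
  assumes "0 < m" "0 < n" "u \<in> Kbip_V m n" "v \<in> Kbip_V m n"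
  shows "vstring (Kbip_V m n) Kbip_E f u = vstring (Kbip_V m n) Kbip_E f v \<longleftrightarrow>
    f u = f v \<and> (isl u = isl v \<or> sum f (Kbip_part m n True) = sum f (Kbip_part m n False))"
proof (cases "m = 1 \<and> n = 1")
  case True
  then have "Kbip_part m n b = (if b then {Inl 0} else {Inr 0})" for b
    by (auto simp: Kbip_part_def)
  with True show ?thesis
    using assms(3,4) vstring_Kbip[OF assms(1,2,3)] vstring_Kbip[OF assms(1,2,4)]
    by (cases u; cases v) auto
next
  case False
  then show ?thesis
    using vstring_Kbip[OF assms(1,2,3)] vstring_Kbip[OF assms(1,2,4)]
    by (cases "isl u"; cases "isl v") auto
qed

lemma inj_on_vstring_Kbip_iff:
  assumes "0 < m" "0 < n"
  shows "inj_on (vstring (Kbip_V m n) Kbip_E f) (Kbip_V m n) \<longleftrightarrow>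
    inj_on f (Kbip_part m n True) \<and> inj_on f (Kbip_part m n False) \<and>
    (sum f (Kbip_part m n True) = sum f (Kbip_part m n False) \<longrightarrow>
       f ` Kbip_part m n True \<inter> f ` Kbip_part m n False = {})"
    (is "inj_on ?s ?V \<longleftrightarrow>
          inj_on f (?P True) \<and> inj_on f (?P False) \<and> (?balanced \<longrightarrow> ?disjoint)")
proof
  assume inj: "inj_on ?s ?V"
  have "inj_on f (?P b)" for b
  proof (rule inj_onI)
    fix u v assume "u \<in> ?P b" "v \<in> ?P b" "f u = f v"
    then show "u = v"
      using vstring_Kbip_eq_iff[OF assms] by (auto simp: mem_Kbip_part intro: inj_onD[OF inj])
  qed
  moreover have ?disjoint if ?balanced
  proof (rule ccontr)
    assume "f ` ?P True \<inter> f ` ?P False \<noteq> {}"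
    then obtain u v where "u \<in> ?P True" "v \<in> ?P False" "f u = f v" by blast
    with that have "u \<in> ?V" "v \<in> ?V" "u \<noteq> v" "?s u = ?s v"
      using vstring_Kbip_eq_iff[OF assms] by (auto simp: mem_Kbip_part)
    then show False using inj_onD[OF inj] by blast
  qed
  ultimately show "inj_on f (?P True) \<and> inj_on f (?P False) \<and> (?balanced \<longrightarrow> ?disjoint)"
    by blast
next
  assume parts: "inj_on f (?P True) \<and> inj_on f (?P False) \<and> (?balanced \<longrightarrow> ?disjoint)"
  show "inj_on ?s ?V"
  proof (rule inj_onI)
    fix u v assume "u \<in> ?V" "v \<in> ?V" "?s u = ?s v"
    then have "f u = f v" "isl u = isl v \<or> ?balanced"
      and "u \<in> ?P (isl u)" "v \<in> ?P (isl v)"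
      using vstring_Kbip_eq_iff[OF assms] by (auto simp: mem_Kbip_part)
    with parts show "u = v"
      by (cases "isl u"; cases "isl v") (auto dest: inj_onD)
  qed
qed

lemma IDI_eqI:
  assumes "inj_on (vstring V E f) V" "card (f ` V) = k"
    and "\<And>g. inj_on (vstring V E g) V \<Longrightarrow> k \<le> card (g ` V)"
  shows "IDI V E = k"
  unfolding IDI_def using assms by (intro Least_equality) auto

lemma card_image_Kbip_ge:
  assumes "0 < m" "0 < n" "inj_on (vstring (Kbip_V m n) Kbip_E f) (Kbip_V m n)"
  shows "n \<le> card (f ` Kbip_V m n)"
proof -
  have "card (f ` Kbip_part m n False) = n"
    using assms by (simp add: inj_on_vstring_Kbip_iff card_image card_Kbip_part)
  moreover have "f ` Kbip_part m n False \<subseteq> f ` Kbip_V m n"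
    by (auto simp: mem_Kbip_part)
  ultimately show ?thesis
    by (metis card_mono finite_Kbip_V finite_imageI)
qed

lemma card_image_Kbip_balanced_gt:
  assumes "0 < n" "inj_on (vstring (Kbip_V n n) Kbip_E f) (Kbip_V n n)"
  shows "n < card (f ` Kbip_V n n)"
proof (rule ccontr)
  let ?P = "Kbip_part n n" and ?R = "f ` Kbip_V n n"
  assume "\<not> n < card ?R"
  have inj_part: "inj_on f (?P b)" for b
    using assms by (cases b) (simp_all add: inj_on_vstring_Kbip_iff)
  have image_part: "f ` ?P b = ?R" for b
  proof (rule card_subset_eq)
    show "finite ?R" by simp
    show "f ` ?P b \<subseteq> ?R" by (auto simp: mem_Kbip_part)
    show "card (f ` ?P b) = card ?R"
      using inj_part card_image_Kbip_ge[OF assms(1,1,2)] \<open>\<not> n < card ?R\<close>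
      by (simp add: card_image card_Kbip_part)
  qed
  have "sum f (?P b) = sum id ?R" for b
    using sum.reindex[OF inj_part, of id b] by (simp add: image_part)
  moreover have "?R \<noteq> {}"
    using assms(1) by (auto simp: Kbip_V_def)
  ultimately show False
    using assms inj_part by (simp add: inj_on_vstring_Kbip_iff image_part)
qed

lemma Kbip_unbalanced_rank_assignment:
  assumes "0 < m" "m < n"
  obtains f :: "nat + nat \<Rightarrow> real"
  where "inj_on (vstring (Kbip_V m n) Kbip_E f) (Kbip_V m n)" "card (f ` Kbip_V m n) = n"
proof
  define f :: "nat + nat \<Rightarrow> real" where "f = case_sum real real"
  have "(\<Sum>i<m. real i) < (\<Sum>i<Suc m. real i)"
    using assms(1) by simp
  also have "\<dots> \<le> (\<Sum>i<n. real i)"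
    using assms(2) by (intro sum_mono2) auto
  finally have "sum f (Kbip_part m n True) \<noteq> sum f (Kbip_part m n False)"
    by (simp add: sum_Kbip_part f_def)
  moreover have "inj_on f (Kbip_part m n b)" for b
    by (auto simp: Kbip_part_def f_def inj_on_def)
  ultimately show "inj_on (vstring (Kbip_V m n) Kbip_E f) (Kbip_V m n)"
    using assms by (simp add: inj_on_vstring_Kbip_iff)
  have "f ` Kbip_V m n = real ` {..<n}"
    using assms(2) by (auto simp: Kbip_V_def f_def image_Un image_image)
  then show "card (f ` Kbip_V m n) = n"
    by (simp add: card_image)
qed

lemma Kbip_balanced_rank_assignment:
  assumes "0 < n"
  obtains f :: "nat + nat \<Rightarrow> real"
  where "inj_on (vstring (Kbip_V n n) Kbip_E f) (Kbip_V n n)" "card (f ` Kbip_V n n) = n + 1"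
proof
  define f :: "nat + nat \<Rightarrow> real" where "f = case_sum real (\<lambda>j. real (Suc j))"
  have "sum f (Kbip_part n n False) = sum f (Kbip_part n n True) + n"
    by (simp add: sum_Kbip_part f_def sum.distrib)
  then have "sum f (Kbip_part n n True) \<noteq> sum f (Kbip_part n n False)"
    using assms by simp
  moreover have "inj_on f (Kbip_part n n b)" for b
    by (auto simp: Kbip_part_def f_def inj_on_def)
  ultimately show "inj_on (vstring (Kbip_V n n) Kbip_E f) (Kbip_V n n)"
    using assms by (simp add: inj_on_vstring_Kbip_iff)
  have "f ` Kbip_V n n = real ` ({..<n} \<union> Suc ` {..<n})"
    by (simp add: Kbip_V_def f_def image_Un image_image)
  also have "{..<n} \<union> Suc ` {..<n} = {..n}"
    using assms by (auto simp: image_Suc_lessThan)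
  finally show "card (f ` Kbip_V n n) = n + 1"
    by (simp add: card_image)
qed

theorem mainTheorem13:
  fixes m n :: nat
  assumes "0 < m" and "m \<le> n"
  shows "IDI (Kbip_V m n) Kbip_E = (if m < n then n else n + 1)"
proof (cases "m < n")
  case True
  obtain f where "inj_on (vstring (Kbip_V m n) Kbip_E f) (Kbip_V m n)" "card (f ` Kbip_V m n) = n"
    using Kbip_unbalanced_rank_assignment[OF assms(1) True] .
  then have "IDI (Kbip_V m n) Kbip_E = n"
    using card_image_Kbip_ge assms by (intro IDI_eqI) auto
  with True show ?thesis by simp
next
  case False
  with assms have "m = n" by simp
  obtain f where "inj_on (vstring (Kbip_V n n) Kbip_E f) (Kbip_V n n)"
      "card (f ` Kbip_V n n) = n + 1"
    using Kbip_balanced_rank_assignment assms \<open>m = n\<close> by blast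
  then have "IDI (Kbip_V n n) Kbip_E = n + 1"
    using card_image_Kbip_balanced_gt assms \<open>m = n\<close> by (intro IDI_eqI) (auto simp: Suc_le_eq)
  with False \<open>m = n\<close> show ?thesis by simp
qed

end
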